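(* Let $G=(K\cup I,E)$ be a split graph and let $L\subseteq K$, $J\subseteq I$ (possibly empty). Then $L\cup J$ is free in the vertex shelling antimatroid of $G$ if and only if either there is no edge between $L$ and $J$, or there exists a vertex $h\in J$ such that $L\subseteq N(h)$ and $N(J\setminus\{h\})\subseteq N(h)\setminus L$.
   Context: A split graph $G=(K\cup I,E)$ is a finite simple graph whose vertex set $V=K\cup I$ comes with a fixed partition into a clique $K$ and an independent set $I$. For $X\subseteq V$, $N(X)$ is the set of vertices of $V\setminus X$ adjacent to some vertex of $X$, and $N(v)=N(\{v\})$. A vertex is simplicial if its neighbours induce a clique. The vertex shelling antimatroid of $G$ is $(V,\mathcal{F})$ where $F\subseteq V$ is feasible iff there is an ordering $f_1,\dots,f_{|F|}$ of $F$ such that each $f_j$ is simplicial in $G$ minus $\{f_1,\dots,f_{j-1}\}$ (the empty set is feasible). The trace of $\mathcal{F}$ on $X\subseteq V$ is $\{F\cap X:F\in\mathcal{F}\}$, and $X$ is free if its trace equals $2^X$. *)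

theory Defs
  imports Main
begin

definition simple_graph :: "'a set \<Rightarrow> ('a \<Rightarrow> 'a \<Rightarrow> bool) \<Rightarrow> bool" where
  "simple_graph V adj \<longleftrightarrow> finite V \<and> (\<forall>x y. adj x y \<longrightarrow> adj y x)
     \<and> (\<forall>x. \<not> adj x x) \<and> (\<forall>x y. adj x y \<longrightarrow> x \<in> V \<and> y \<in> V)"

definition split_graph :: "'a set \<Rightarrow> ('a \<Rightarrow> 'a \<Rightarrow> bool) \<Rightarrow> 'a set \<Rightarrow> 'a set \<Rightarrow> bool" where
  "split_graph V adj K I \<longleftrightarrow> simple_graph V adj \<and> V = K \<union> I \<and> K \<inter> I = {}
     \<and> (\<forall>x\<in>K. \<forall>y\<in>K. x \<noteq> y \<longrightarrow> adj x y)
     \<and> (\<forall>x\<in>I. \<forall>y\<in>I. \<not> adj x y)"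

definition nbhd :: "'a set \<Rightarrow> ('a \<Rightarrow> 'a \<Rightarrow> bool) \<Rightarrow> 'a set \<Rightarrow> 'a set" where
  "nbhd V adj X = {v \<in> V - X. \<exists>x\<in>X. adj x v}"

definition simplicial_in :: "'a set \<Rightarrow> ('a \<Rightarrow> 'a \<Rightarrow> bool) \<Rightarrow> 'a set \<Rightarrow> 'a \<Rightarrow> bool" where
  "simplicial_in V adj D v \<longleftrightarrow> v \<in> V - D \<and>
     (\<forall>x\<in>nbhd (V - D) adj {v}. \<forall>y\<in>nbhd (V - D) adj {v}. x \<noteq> y \<longrightarrow> adj x y)"

definition shelling_feasible :: "'a set \<Rightarrow> ('a \<Rightarrow> 'a \<Rightarrow> bool) \<Rightarrow> 'a set \<Rightarrow> bool" where
  "shelling_feasible V adj F \<longleftrightarrow> (\<exists>fs. distinct fs \<and> set fs = F \<and>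
     (\<forall>j < length fs. simplicial_in V adj (set (take j fs)) (fs ! j)))"

definition shelling_antimatroid :: "'a set \<Rightarrow> ('a \<Rightarrow> 'a \<Rightarrow> bool) \<Rightarrow> 'a set set" where
  "shelling_antimatroid V adj = {F. shelling_feasible V adj F}"

definition trace :: "'a set set \<Rightarrow> 'a set \<Rightarrow> 'a set set" where
  "trace \<F> X = {F \<inter> X | F. F \<in> \<F>}"

definition free_in :: "'a set set \<Rightarrow> 'a set \<Rightarrow> bool" where
  "free_in \<F> X \<longleftrightarrow> trace \<F> X = Pow X"

end

theory Submission
  imports Defs
begin

text \<open>Sufficiency: given \<open>S \<subseteq> L \<union> J\<close>, shell the independent vertices outside \<open>J - S\<close>,
  then (in the second case) the clique vertices outside \<open>N(h)\<close>, and finally \<open>S \<inter> L\<close>.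
  A clique vertex is simplicial at its turn because its only remaining independent neighbour,
  if any, is \<open>h\<close>, which sees all remaining clique vertices.
  Necessity: freeness lets every \<open>l \<in> L\<close> be shelled before all other vertices of \<open>L \<union> J\<close>,
  and at that moment the remaining neighbours of \<open>l\<close> form a clique. Applied to \<open>l\<close>, and where
  needed to a clique vertex shelled before \<open>l\<close>, this decides every adjacency in the
  condition.\<close>

lemma shelling_feasible_empty: "shelling_feasible V adj {}"
  unfolding shelling_feasible_def by (rule exI[of _ "[]"]) simp

lemma shelling_feasible_insert:
  assumes "shelling_feasible V adj D" "simplicial_in V adj D v"
  shows "shelling_feasible V adj (insert v D)"
proof -
  obtain fs where fs: "distinct fs" "set fs = D"
    "\<forall>j<length fs. simplicial_in V adj (set (take j fs)) (fs ! j)"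
    using assms(1) unfolding shelling_feasible_def by blast
  have "v \<notin> D" using assms(2) unfolding simplicial_in_def by blast
  have "simplicial_in V adj (set (take j (fs @ [v]))) ((fs @ [v]) ! j)"
    if "j < length (fs @ [v])" for j
    using that fs(2,3) assms(2) by (cases "j < length fs") (auto simp: nth_append)
  then show ?thesis
    unfolding shelling_feasible_def using fs \<open>v \<notin> D\<close> by (intro exI[of _ "fs @ [v]"]) auto
qed

lemma shelling_feasible_union:
  assumes "shelling_feasible V adj D" "finite S"
    and "\<And>T v. T \<subseteq> S \<Longrightarrow> v \<in> S - T \<Longrightarrow> simplicial_in V adj (D \<union> T) v"
  shows "shelling_feasible V adj (D \<union> S)"
  using assms(2,3)
proof (induction S rule: finite_induct)
  case empty
  then show ?case using assms(1) by simp
next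
  case (insert x S)
  then have "shelling_feasible V adj (D \<union> S)" "simplicial_in V adj (D \<union> S) x" by blast+
  then show ?case using shelling_feasible_insert by fastforce
qed

lemma distinct_nth_notin_set_take:
  assumes "distinct xs" "p < length xs"
  shows "xs ! p \<notin> set (take p xs)"
proof
  assume "xs ! p \<in> set (take p xs)"
  then obtain q where "q < p" "xs ! q = xs ! p"
    by (auto simp: in_set_conv_nth)
  then show False using assms nth_eq_iff_index_eq by fastforce
qed

lemma shelling_feasible_obtain_simplicial:
  assumes "shelling_feasible V adj F" "x \<in> F"
  obtains D where "shelling_feasible V adj D" "D \<subseteq> F - {x}" "simplicial_in V adj D x"
proof -
  obtain fs where fs: "distinct fs" "set fs = F"
    and simp: "\<forall>j<length fs. simplicial_in V adj (set (take j fs)) (fs ! j)"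
    using assms(1) unfolding shelling_feasible_def by blast
  obtain p where p: "p < length fs" "fs ! p = x"
    using assms(2) fs(2) by (meson in_set_conv_nth)
  have "shelling_feasible V adj (set (take p fs))"
    unfolding shelling_feasible_def
  proof (intro exI[of _ "take p fs"] conjI allI impI)
    fix j assume "j < length (take p fs)"
    then show "simplicial_in V adj (set (take j (take p fs))) (take p fs ! j)"
      using simp by (simp add: min_absorb1)
  qed (use fs in simp_all)
  moreover have "set (take p fs) \<subseteq> F - {x}"
    using distinct_nth_notin_set_take[OF fs(1) p(1)] p(2) fs(2) set_take_subset[of p fs] by blast
  moreover have "simplicial_in V adj (set (take p fs)) x" using simp p by blast
  ultimately show ?thesis using that by blast
qed

lemma simplicial_in_adj:
  assumes "simple_graph V adj" "simplicial_in V adj D v"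
    and "x \<notin> D" "y \<notin> D" "adj v x" "adj v y" "x \<noteq> y"
  shows "adj x y"
  using assms unfolding simple_graph_def simplicial_in_def nbhd_def by blast

lemma free_in_shelling_antimatroid_iff:
  "free_in (shelling_antimatroid V adj) X \<longleftrightarrow>
     (\<forall>S\<subseteq>X. \<exists>F. shelling_feasible V adj F \<and> F \<inter> X = S)"
proof -
  have "trace (shelling_antimatroid V adj) X \<subseteq> Pow X"
    unfolding trace_def by blast
  then have "free_in (shelling_antimatroid V adj) X \<longleftrightarrow> Pow X \<subseteq> trace (shelling_antimatroid V adj) X"
    unfolding free_in_def by blast
  also have "\<dots> \<longleftrightarrow> (\<forall>S\<subseteq>X. \<exists>F. shelling_feasible V adj F \<and> F \<inter> X = S)"
    unfolding trace_def shelling_antimatroid_def by blast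
  finally show ?thesis .
qed

lemma free_in_shelling_obtain_simplicial:
  assumes "free_in (shelling_antimatroid V adj) X" "x \<in> X"
  obtains D where "shelling_feasible V adj D" "D \<inter> X = {}" "simplicial_in V adj D x"
proof -
  obtain F where F: "shelling_feasible V adj F" "F \<inter> X = {x}"
    using assms free_in_shelling_antimatroid_iff[of V adj X] by blast
  then have "x \<in> F" by blast
  with F(1) obtain D where "shelling_feasible V adj D" "D \<subseteq> F - {x}" "simplicial_in V adj D x"
    by (rule shelling_feasible_obtain_simplicial)
  moreover have "D \<inter> X = {}" using \<open>D \<subseteq> F - {x}\<close> F(2) by blast
  ultimately show ?thesis using that by blast
qed

lemma mem_nbhd_iff:
  assumes "simple_graph V adj"
  shows "x \<in> nbhd V adj X \<longleftrightarrow> x \<notin> X \<and> (\<exists>y\<in>X. adj y x)"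
  using assms unfolding simple_graph_def nbhd_def by blast

context
  fixes V K I :: "'a set" and adj :: "'a \<Rightarrow> 'a \<Rightarrow> bool"
  assumes split: "split_graph V adj K I"
begin

lemma split_simple_graph: "simple_graph V adj"
  using split unfolding split_graph_def by blast

lemma split_adj_sym: "adj x y \<Longrightarrow> adj y x"
  using split_simple_graph unfolding simple_graph_def by blast

lemma split_adj_in_V: "adj x y \<Longrightarrow> x \<in> V"
  using split_simple_graph unfolding simple_graph_def by blast

lemma split_finite: "finite V"
  using split_simple_graph unfolding simple_graph_def by blast

lemma split_V_eq: "V = K \<union> I"
  using split unfolding split_graph_def by blast

lemma split_disjoint: "K \<inter> I = {}"
  using split unfolding split_graph_def by blast

lemma split_clique_adj: "x \<in> K \<Longrightarrow> y \<in> K \<Longrightarrow> x \<noteq> y \<Longrightarrow> adj x y"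
  using split unfolding split_graph_def by blast

lemma split_indep_not_adj: "x \<in> I \<Longrightarrow> y \<in> I \<Longrightarrow> \<not> adj x y"
  using split unfolding split_graph_def by blast

lemma split_mem_nbhd_iff: "x \<in> nbhd V adj X \<longleftrightarrow> x \<notin> X \<and> (\<exists>y\<in>X. adj y x)"
  using mem_nbhd_iff[OF split_simple_graph] .

lemma simplicial_in_indep: "v \<in> I \<Longrightarrow> v \<notin> D \<Longrightarrow> simplicial_in V adj D v"
  using split unfolding split_graph_def simple_graph_def simplicial_in_def nbhd_def by blast

lemma simplicial_in_clique:
  assumes "v \<in> K" "v \<notin> D"
    and "\<And>i. i \<in> I - D \<Longrightarrow> adj v i \<Longrightarrow>
      (\<forall>i'\<in>I - D. adj v i' \<longrightarrow> i' = i) \<and> (\<forall>k\<in>K - D - {v}. adj i k)"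
  shows "simplicial_in V adj D v"
  unfolding simplicial_in_def
proof (intro conjI ballI impI)
  show "v \<in> V - D" using assms(1,2) split_V_eq by blast
  fix x y assume "x \<in> nbhd (V - D) adj {v}" "y \<in> nbhd (V - D) adj {v}" "x \<noteq> y"
  then have xy: "x \<in> V - D - {v}" "y \<in> V - D - {v}" "adj v x" "adj v y"
    unfolding nbhd_def by auto
  consider "x \<in> K" "y \<in> K" | "x \<in> I" | "y \<in> I"
    using xy split_V_eq by blast
  then show "adj x y"
  proof cases
    case 1
    then show ?thesis using \<open>x \<noteq> y\<close> split_clique_adj by blast
  next
    case 2
    then have "y \<notin> I" "\<forall>k\<in>K - D - {v}. adj x k" using assms(3)[of x] xy \<open>x \<noteq> y\<close> by auto
    then show ?thesis using xy split_V_eq by blast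
  next
    case 3
    then have "x \<notin> I" "\<forall>k\<in>K - D - {v}. adj y k" using assms(3)[of y] xy \<open>x \<noteq> y\<close> by auto
    then show ?thesis using xy split_V_eq split_adj_sym by blast
  qed
qed

lemma shelling_feasible_indep:
  assumes "B \<subseteq> I"
  shows "shelling_feasible V adj B"
proof -
  have "finite B" using assms split_finite split_V_eq finite_subset by blast
  then have "shelling_feasible V adj ({} \<union> B)"
    using assms by (intro shelling_feasible_union shelling_feasible_empty simplicial_in_indep) blast+
  then show ?thesis by simp
qed

lemma shelling_feasible_union_clique:
  assumes "shelling_feasible V adj D" "A \<subseteq> K" "A \<inter> D = {}"
    and "\<And>v i. v \<in> A \<Longrightarrow> i \<in> I - D \<Longrightarrow> adj v i \<Longrightarrow>
      (\<forall>i'\<in>I - D. adj v i' \<longrightarrow> i' = i) \<and> (\<forall>k\<in>K - D - {v}. adj i k)"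
  shows "shelling_feasible V adj (D \<union> A)"
proof (rule shelling_feasible_union[OF assms(1)])
  show "finite A" using assms(2) split_finite split_V_eq finite_subset by blast
  fix T v assume "T \<subseteq> A" "v \<in> A - T"
  then have T: "I - (D \<union> T) = I - D" "K - (D \<union> T) - {v} \<subseteq> K - D - {v}"
    using assms(2) split_disjoint by blast+
  show "simplicial_in V adj (D \<union> T) v"
  proof (rule simplicial_in_clique)
    show "v \<in> K" "v \<notin> D \<union> T" using \<open>v \<in> A - T\<close> assms(2,3) by blast+
    fix i assume "i \<in> I - (D \<union> T)" "adj v i"
    then show "(\<forall>i'\<in>I - (D \<union> T). adj v i' \<longrightarrow> i' = i) \<and> (\<forall>k\<in>K - (D \<union> T) - {v}. adj i k)"
      using assms(4)[of v i] \<open>v \<in> A - T\<close> T by blast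
  qed
qed

lemma free_imp_L_subset_nbhd:
  assumes "L \<subseteq> K" "J \<subseteq> I" "free_in (shelling_antimatroid V adj) (L \<union> J)"
    and "l0 \<in> L" "h \<in> J" "adj l0 h"
  shows "L \<subseteq> nbhd V adj {h}"
proof
  fix l assume "l \<in> L"
  obtain D where D: "D \<inter> (L \<union> J) = {}" "simplicial_in V adj D l0"
    using free_in_shelling_obtain_simplicial[OF assms(3) UnI1[OF assms(4)]] by metis
  have "l \<noteq> h" using \<open>l \<in> L\<close> assms(1,2,5) split_disjoint by blast
  moreover have "adj l h"
  proof (cases "l = l0")
    case False
    then have "adj l0 l" using \<open>l \<in> L\<close> assms(1,4) split_clique_adj by blast
    moreover have "l \<notin> D" "h \<notin> D" using D(1) \<open>l \<in> L\<close> assms(5) by blast+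
    ultimately show ?thesis
      using simplicial_in_adj[OF split_simple_graph D(2)] assms(6) \<open>l \<noteq> h\<close> by simp
  qed (use assms(6) in simp)
  ultimately show "l \<in> nbhd V adj {h}" by (simp add: split_mem_nbhd_iff split_adj_sym)
qed

lemma free_imp_unique_nbr_in_J:
  assumes "L \<subseteq> K" "J \<subseteq> I" "free_in (shelling_antimatroid V adj) (L \<union> J)"
    and "l \<in> L" "j \<in> J" "j' \<in> J" "adj l j" "adj l j'"
  shows "j = j'"
proof (rule ccontr)
  assume "j \<noteq> j'"
  obtain D where D: "D \<inter> (L \<union> J) = {}" "simplicial_in V adj D l"
    using free_in_shelling_obtain_simplicial[OF assms(3) UnI1[OF assms(4)]] by metis
  have "j \<notin> D" "j' \<notin> D" using D(1) assms(5,6) by blast+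
  then have "adj j j'"
    using simplicial_in_adj[OF split_simple_graph D(2)] assms(7,8) \<open>j \<noteq> j'\<close> by simp
  then show False using split_indep_not_adj assms(2,5,6) by blast
qed

text \<open>A neighbour \<open>x \<notin> N(h)\<close> of \<open>J - {h}\<close> cannot survive the shelling of \<open>l0\<close>, since \<open>l0\<close>
  would then see both \<open>x\<close> and \<open>h\<close>; and it cannot be shelled earlier, since \<open>x\<close> would then
  see both \<open>l0\<close> and its neighbour in \<open>J - {h}\<close>.\<close>
lemma free_imp_nbhd_subset:
  assumes "L \<subseteq> K" "J \<subseteq> I" "free_in (shelling_antimatroid V adj) (L \<union> J)"
    and "l0 \<in> L" "h \<in> J" "adj l0 h"
  shows "nbhd V adj (J - {h}) \<subseteq> nbhd V adj {h} - L"
proof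
  fix x assume "x \<in> nbhd V adj (J - {h})"
  then obtain j where j: "j \<in> J" "j \<noteq> h" "adj j x" by (auto simp: split_mem_nbhd_iff)
  have no_edge: "\<not> adj l j" if "l \<in> L" for l
  proof
    assume "adj l j"
    moreover have "adj l h"
      using free_imp_L_subset_nbhd[OF assms] \<open>l \<in> L\<close> by (auto simp: split_mem_nbhd_iff split_adj_sym)
    ultimately show False
      using free_imp_unique_nbr_in_J[OF assms(1-3) \<open>l \<in> L\<close> j(1) assms(5)] j(2) by blast
  qed
  have "x \<in> K"
    using j(1,3) assms(2) split_adj_in_V[OF split_adj_sym] split_V_eq split_indep_not_adj by blast
  have "x \<notin> L" using no_edge j(3) split_adj_sym by blast
  have "x \<noteq> h" "j \<noteq> l0" using \<open>x \<in> K\<close> j(1) assms(1,2,4,5) split_disjoint by blast+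
  have "x \<noteq> l0" using \<open>x \<notin> L\<close> assms(4) by blast
  have "adj l0 x" using \<open>x \<in> K\<close> \<open>x \<noteq> l0\<close> assms(1,4) split_clique_adj by blast
  obtain D where D: "shelling_feasible V adj D" "D \<inter> (L \<union> J) = {}" "simplicial_in V adj D l0"
    using free_in_shelling_obtain_simplicial[OF assms(3) UnI1[OF assms(4)]] by metis
  have "adj h x"
  proof (cases "x \<in> D")
    case False
    moreover have "h \<notin> D" using D(2) assms(5) by blast
    ultimately show ?thesis
      using simplicial_in_adj[OF split_simple_graph D(3)] \<open>adj l0 x\<close> assms(6) \<open>x \<noteq> h\<close>
      by (simp add: split_adj_sym)
  next
    case True
    with D(1) obtain D' where D': "shelling_feasible V adj D'" "D' \<subseteq> D - {x}" "simplicial_in V adj D' x"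
      by (rule shelling_feasible_obtain_simplicial)
    have "j \<notin> D'" "l0 \<notin> D'" using D(2) D'(2) j(1) assms(4) by blast+
    then have "adj j l0"
      using simplicial_in_adj[OF split_simple_graph D'(3)] j(3) \<open>adj l0 x\<close> \<open>j \<noteq> l0\<close>
      by (simp add: split_adj_sym)
    then show ?thesis using no_edge[OF assms(4)] split_adj_sym by blast
  qed
  then show "x \<in> nbhd V adj {h} - L" using \<open>x \<noteq> h\<close> \<open>x \<notin> L\<close> by (simp add: split_mem_nbhd_iff)
qed

lemma free_if_no_edge:
  assumes "L \<subseteq> K" "J \<subseteq> I" "\<forall>l\<in>L. \<forall>j\<in>J. \<not> adj l j"
  shows "free_in (shelling_antimatroid V adj) (L \<union> J)"
  unfolding free_in_shelling_antimatroid_iff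
proof (intro allI impI)
  fix S assume "S \<subseteq> L \<union> J"
  let ?D = "I - (J - S)"
  have "shelling_feasible V adj (?D \<union> S \<inter> L)"
  proof (rule shelling_feasible_union_clique)
    show "shelling_feasible V adj ?D" by (rule shelling_feasible_indep) blast
    show "S \<inter> L \<subseteq> K" "S \<inter> L \<inter> ?D = {}" using assms(1) split_disjoint by blast+
    fix v i assume "v \<in> S \<inter> L" "i \<in> I - ?D" "adj v i"
    then show "(\<forall>i'\<in>I - ?D. adj v i' \<longrightarrow> i' = i) \<and> (\<forall>k\<in>K - ?D - {v}. adj i k)"
      using assms(3) by blast
  qed
  moreover have "(?D \<union> S \<inter> L) \<inter> (L \<union> J) = S"
    using \<open>S \<subseteq> L \<union> J\<close> assms(1,2) split_disjoint by blast
  ultimately show "\<exists>F. shelling_feasible V adj F \<and> F \<inter> (L \<union> J) = S" by blast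
qed

lemma free_if_dominating_vertex:
  assumes "L \<subseteq> K" "J \<subseteq> I" "h \<in> J"
    and "L \<subseteq> nbhd V adj {h}" "nbhd V adj (J - {h}) \<subseteq> nbhd V adj {h} - L"
  shows "free_in (shelling_antimatroid V adj) (L \<union> J)"
  unfolding free_in_shelling_antimatroid_iff
proof (intro allI impI)
  fix S assume "S \<subseteq> L \<union> J"
  let ?D = "I - (J - S)" and ?C = "K - nbhd V adj {h}"
  have only_nbr_h: "i = h" if "v \<in> K" "v \<notin> nbhd V adj {h} - L" "i \<in> J" "adj v i" for v i
  proof (rule ccontr)
    assume "i \<noteq> h"
    have "v \<notin> J" using that(1) assms(2) split_disjoint by blast
    then have "v \<in> nbhd V adj (J - {h})"
      unfolding split_mem_nbhd_iff using that(3,4) \<open>i \<noteq> h\<close> split_adj_sym by blast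
    then show False using that(2) assms(5) by blast
  qed
  have "shelling_feasible V adj (?D \<union> ?C)"
  proof (rule shelling_feasible_union_clique)
    show "shelling_feasible V adj ?D" by (rule shelling_feasible_indep) blast
    show "?C \<subseteq> K" "?C \<inter> ?D = {}" using split_disjoint by blast+
    fix v i assume "v \<in> ?C" "i \<in> I - ?D" "adj v i"
    moreover have "v \<notin> nbhd V adj {h}" "v \<noteq> h" using \<open>v \<in> ?C\<close> assms(2,3) split_disjoint by blast+
    ultimately have "i \<noteq> h" by (auto simp: split_mem_nbhd_iff split_adj_sym)
    with \<open>v \<in> ?C\<close> \<open>i \<in> I - ?D\<close> \<open>adj v i\<close> show
      "(\<forall>i'\<in>I - ?D. adj v i' \<longrightarrow> i' = i) \<and> (\<forall>k\<in>K - ?D - {v}. adj i k)"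
      using only_nbr_h by blast
  qed
  then have "shelling_feasible V adj ((?D \<union> ?C) \<union> S \<inter> L)"
  proof (rule shelling_feasible_union_clique)
    show "S \<inter> L \<subseteq> K" "S \<inter> L \<inter> (?D \<union> ?C) = {}" using assms(1,4) split_disjoint by blast+
    fix v i assume "v \<in> S \<inter> L" "i \<in> I - (?D \<union> ?C)" "adj v i"
    have "\<forall>i'\<in>I - (?D \<union> ?C). adj v i' \<longrightarrow> i' = h"
      using \<open>v \<in> S \<inter> L\<close> only_nbr_h assms(1) by blast
    moreover have "\<forall>k\<in>K - (?D \<union> ?C) - {v}. adj h k" by (auto simp: split_mem_nbhd_iff)
    ultimately show "(\<forall>i'\<in>I - (?D \<union> ?C). adj v i' \<longrightarrow> i' = i) \<and> (\<forall>k\<in>K - (?D \<union> ?C) - {v}. adj i k)"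
      using \<open>i \<in> I - (?D \<union> ?C)\<close> \<open>adj v i\<close> by blast
  qed
  moreover have "((?D \<union> ?C) \<union> S \<inter> L) \<inter> (L \<union> J) = S"
    using \<open>S \<subseteq> L \<union> J\<close> assms(1,2,4) split_disjoint by blast
  ultimately show "\<exists>F. shelling_feasible V adj F \<and> F \<inter> (L \<union> J) = S" by blast
qed

end

theorem mainTheorem15:
  fixes V K I L J :: "'a set" and adj :: "'a \<Rightarrow> 'a \<Rightarrow> bool"
  assumes "split_graph V adj K I" and "L \<subseteq> K" and "J \<subseteq> I"
  shows "free_in (shelling_antimatroid V adj) (L \<union> J) \<longleftrightarrow>
    (\<not> (\<exists>l\<in>L. \<exists>j\<in>J. adj l j)) \<or>
    (\<exists>h\<in>J. L \<subseteq> nbhd V adj {h} \<and> nbhd V adj (J - {h}) \<subseteq> nbhd V adj {h} - L)"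
proof
  assume free: "free_in (shelling_antimatroid V adj) (L \<union> J)"
  show "(\<not> (\<exists>l\<in>L. \<exists>j\<in>J. adj l j)) \<or>
    (\<exists>h\<in>J. L \<subseteq> nbhd V adj {h} \<and> nbhd V adj (J - {h}) \<subseteq> nbhd V adj {h} - L)"
  proof (cases "\<exists>l\<in>L. \<exists>j\<in>J. adj l j")
    case True
    then obtain l0 h where "l0 \<in> L" "h \<in> J" "adj l0 h" by blast
    then show ?thesis
      using free_imp_L_subset_nbhd[OF assms free] free_imp_nbhd_subset[OF assms free] by blast
  qed blast
next
  assume "(\<not> (\<exists>l\<in>L. \<exists>j\<in>J. adj l j)) \<or>
    (\<exists>h\<in>J. L \<subseteq> nbhd V adj {h} \<and> nbhd V adj (J - {h}) \<subseteq> nbhd V adj {h} - L)"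
  then show "free_in (shelling_antimatroid V adj) (L \<union> J)"
    using free_if_no_edge[OF assms] free_if_dominating_vertex[OF assms] by blast
qed

end
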